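(* Let $N\ge1$, $K>0$, $r_1,\dots,r_N>0$, and let $(\mu_{ij})_{1\le i,j\le N}$ be a nonnegative, symmetric, irreducible real matrix. Consider the system $$\frac{dv_i}{dt}=v_i\left[r_i-\frac{1}{K}\sum_{j=1}^N r_jv_j\right]+\sum_{j=1}^N\mu_{ij}(v_j-v_i),\qquad i=1,\dots,N,$$ which has a unique positive stationary solution $\bar v$. Then for any initial datum $v(0)\in[0,\infty)^N$ not identically zero, the solution $v(t)$ converges exponentially fast to $\bar v$: there exist two positive constants $C_1$ and $C_2$ such that $\|v(t)-\bar v\|_\infty\le C_1e^{-C_2t}$ for all $t\ge0$.
   Context: A stationary solution is a vector $\bar v$ at which the right-hand side of the system vanishes for every $i$; positive means all components are strictly positive. *)

theory Defs
  imports "HOL-Analysis.Analysis"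
begin

text \<open>Vectors in R^N are modelled as real^'n with N = CARD('n) (automatically at least 1).\<close>

definition nonneg_matrix :: "real^'n^'n \<Rightarrow> bool" where
  "nonneg_matrix mu \<longleftrightarrow> (\<forall>i j. mu $ i $ j \<ge> 0)"

definition symmetric_matrix :: "real^'n^'n \<Rightarrow> bool" where
  "symmetric_matrix mu \<longleftrightarrow> (\<forall>i j. mu $ i $ j = mu $ j $ i)"

text \<open>Irreducible: the directed graph with an edge i -> j whenever mu_ij is nonzero is
  strongly connected (every index reaches every other index).\<close>
definition irreducible_matrix :: "real^'n^'n \<Rightarrow> bool" where
  "irreducible_matrix mu \<longleftrightarrow> (\<forall>i j. (i, j) \<in> {(a, b). mu $ a $ b \<noteq> 0}\<^sup>*)"

definition rhs :: "real \<Rightarrow> real^'n \<Rightarrow> real^'n^'n \<Rightarrow> real^'n \<Rightarrow> real^'n" where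
  "rhs K r mu v = (\<chi> i. v $ i * (r $ i - (1 / K) * (\<Sum>j\<in>UNIV. r $ j * v $ j))
                       + (\<Sum>j\<in>UNIV. mu $ i $ j * (v $ j - v $ i)))"

definition stationary :: "real \<Rightarrow> real^'n \<Rightarrow> real^'n^'n \<Rightarrow> real^'n \<Rightarrow> bool" where
  "stationary K r mu v \<longleftrightarrow> rhs K r mu v = 0"

definition positive_vec :: "real^'n \<Rightarrow> bool" where
  "positive_vec v \<longleftrightarrow> (\<forall>i. v $ i > 0)"

definition nonneg_vec :: "real^'n \<Rightarrow> bool" where
  "nonneg_vec v \<longleftrightarrow> (\<forall>i. v $ i \<ge> 0)"

definition linf_norm :: "real^'n \<Rightarrow> real" where
  "linf_norm v = Max (range (\<lambda>i. \<bar>v $ i\<bar>))"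

end

theory Submission
  imports Defs
begin

text \<open>The system reads \<open>v' = A v - ((r \<bullet> v) / K) v\<close> with the self-adjoint operator
  \<open>A = diag r + (graph Laplacian of \<mu>)\<close>. The Rayleigh quotient of \<open>A\<close> is maximised by a
  positive unit vector \<open>\<psi>\<close> (Perron--Frobenius, via \<open>\<bar>x\<bar>\<close>), with eigenvalue \<open>l > 0\<close> and a
  strict spectral gap \<open>l2 < l\<close> on \<open>\<psi>\<^sup>\<bottom>\<close>; hence the only positive stationary state is
  \<open>(l K / (r \<bullet> \<psi>)) \<psi>\<close>. A solution splits as \<open>v = a \<psi> + w\<close> with \<open>w \<bottom> \<psi>\<close>: the
  amplitude \<open>a\<close> stays positive, the gap makes \<open>\<parallel>w\<parallel>\<^sup>2 / a\<^sup>2\<close> decay like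
  \<open>e\<^sup>-\<^sup>2\<^sup>(\<^sup>l\<^sup>-\<^sup>l\<^sup>2\<^sup>)\<^sup>t\<close>, and \<open>1/a\<close> solves the linear equation
  \<open>(1/a)' = -l (1/a - (r \<bullet> \<psi>)/(l K)) + (r \<bullet> w)/(a K)\<close> whose forcing decays at that rate.\<close>

definition growth_op :: "real^'n \<Rightarrow> real^'n^'n \<Rightarrow> real^'n \<Rightarrow> real^'n" where
  "growth_op r mu x = (\<chi> i. r$i * x$i + (\<Sum>j\<in>UNIV. mu$i$j * (x$j - x$i)))"

definition vec_abs :: "real^'n \<Rightarrow> real^'n" where
  "vec_abs x = (\<chi> i. \<bar>x$i\<bar>)"

subsection \<open>Quadratic forms of self-adjoint operators\<close>

lemma quadratic_form_le_of_unit_vectors: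
  fixes A :: "'a::real_inner \<Rightarrow> 'a"
  assumes lin: "linear A"
    and unit: "\<And>z. norm z = 1 \<Longrightarrow> P z \<Longrightarrow> z \<bullet> A z \<le> l"
    and scale: "\<And>c z. P z \<Longrightarrow> P (c *\<^sub>R z)" and "P y"
  shows "y \<bullet> A y \<le> l * (y \<bullet> y)"
proof (cases "y = 0")
  case True
  then show ?thesis using linear_0[OF lin] by simp
next
  case False
  define z where "z = (1 / norm y) *\<^sub>R y"
  have "norm z = 1" "P z"
    using False scale \<open>P y\<close> by (simp_all add: z_def)
  then have "z \<bullet> A z \<le> l"
    by (rule unit)
  moreover have "A z = (1 / norm y) *\<^sub>R A y"
    by (simp add: z_def linear_cmul[OF lin])
  ultimately have "(y \<bullet> A y) / (norm y)\<^sup>2 \<le> l"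
    by (simp add: z_def power2_eq_square)
  then show ?thesis
    using False by (simp add: field_simps power2_norm_eq_inner)
qed

lemma rayleigh_maximizer_is_eigenvector:
  fixes A :: "'a::real_inner \<Rightarrow> 'a"
  assumes lin: "linear A" and adj: "\<And>x y. x \<bullet> A y = A x \<bullet> y"
    and bound: "\<And>y. y \<bullet> A y \<le> l * (y \<bullet> y)" and max: "x \<bullet> A x = l * (x \<bullet> x)"
  shows "A x = l *\<^sub>R x"
proof -
  define z where "z = A x - l *\<^sub>R x"
  define k where "k = z \<bullet> z"
  define m where "m = z \<bullet> A z - l * (z \<bullet> z)"
  have m_nonpos: "m \<le> 0"
    using bound unfolding m_def by (simp add: algebra_simps)
  have excess: "2 * s * k + s\<^sup>2 * m \<le> 0" for s
  proof -
    have "z \<bullet> A x - l * (z \<bullet> x) = k"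
      by (simp add: k_def z_def inner_commute algebra_simps)
    moreover have "x \<bullet> A z = z \<bullet> A x"
      by (metis adj inner_commute)
    ultimately have "(x + s *\<^sub>R z) \<bullet> A (x + s *\<^sub>R z) - l * ((x + s *\<^sub>R z) \<bullet> (x + s *\<^sub>R z))
        = 2 * s * k + s\<^sup>2 * m"
      using max
      by (simp add: m_def linear_add[OF lin] linear_cmul[OF lin] inner_commute[of x z]
          power2_eq_square algebra_simps)
    then show ?thesis using bound[of "x + s *\<^sub>R z"] by linarith
  qed
  have "1 - m \<noteq> 0"
    using m_nonpos by simp
  then have "2 * (k / (1 - m)) * k + (k / (1 - m))\<^sup>2 * m = k\<^sup>2 * (2 - m) / (1 - m)\<^sup>2"
    by (simp add: divide_simps power2_eq_square) (simp add: algebra_simps)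
  then have "k\<^sup>2 * (2 - m) / (1 - m)\<^sup>2 \<le> 0"
    using excess[of "k / (1 - m)"] by simp
  then have "k\<^sup>2 * (2 - m) \<le> 0"
    using m_nonpos by (simp add: divide_le_0_iff)
  then have "k = 0"
    using m_nonpos by (simp add: mult_le_0_iff)
  then show ?thesis by (simp add: k_def z_def)
qed

subsection \<open>The linear part of the system\<close>

lemma positive_vec_imp_nonneg_vec: "positive_vec x \<Longrightarrow> nonneg_vec x"
  by (simp add: positive_vec_def nonneg_vec_def less_imp_le)

lemma positive_vec_nonzero: "positive_vec (x::real^'n) \<Longrightarrow> x \<noteq> 0"
  by (auto simp: positive_vec_def)

lemma inner_pos_of_positive_nonneg:
  assumes "positive_vec x" "nonneg_vec y" "y \<noteq> (0::real^'n)"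
  shows "x \<bullet> y > 0"
proof -
  obtain i where "y $ i \<noteq> 0"
    using assms(3) by (auto simp: vec_eq_iff)
  then have "x $ i * y $ i > 0"
    using assms(1,2) by (simp add: positive_vec_def nonneg_vec_def order_le_neq_trans)
  moreover have "\<forall>j\<in>UNIV. x $ j * y $ j \<ge> 0"
    using assms(1,2) by (simp add: positive_vec_def nonneg_vec_def less_imp_le)
  ultimately show ?thesis
    unfolding inner_vec_def by (simp add: sum_pos2[of UNIV i])
qed

lemma inner_pos_of_positive: "positive_vec x \<Longrightarrow> positive_vec y \<Longrightarrow> x \<bullet> y > 0"
  by (simp add: inner_pos_of_positive_nonneg positive_vec_imp_nonneg_vec positive_vec_nonzero)

lemma rhs_eq_growth_op: "rhs K r mu v = growth_op r mu v - ((r \<bullet> v) / K) *\<^sub>R v"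
  unfolding rhs_def growth_op_def inner_vec_def
  by (simp add: vec_eq_iff algebra_simps sum_divide_distrib)

lemma linear_growth_op: "linear (growth_op r mu)"
  unfolding growth_op_def
  by (rule linearI) (simp_all add: vec_eq_iff sum.distrib[symmetric] sum_distrib_left algebra_simps)

lemma growth_op_const_one: "growth_op r mu (\<chi> i. 1) = r"
  by (simp add: growth_op_def vec_eq_iff)

lemma continuous_on_growth_op_quadratic: "continuous_on S (\<lambda>x. x \<bullet> growth_op r mu x)"
  unfolding growth_op_def by (intro continuous_intros)

lemma growth_op_self_adjoint:
  assumes "symmetric_matrix mu"
  shows "x \<bullet> growth_op r mu y = growth_op r mu x \<bullet> y"
proof -
  have swap: "(\<Sum>i\<in>UNIV. \<Sum>j\<in>UNIV. x$i * mu$i$j * y$j) = (\<Sum>i\<in>UNIV. \<Sum>j\<in>UNIV. mu$i$j * x$j * y$i)"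
    using assms by (subst sum.swap) (simp add: symmetric_matrix_def mult.commute mult.left_commute)
  have "x \<bullet> growth_op r mu y = (\<Sum>i\<in>UNIV. x$i * r$i * y$i)
      + (\<Sum>i\<in>UNIV. \<Sum>j\<in>UNIV. x$i * mu$i$j * y$j) - (\<Sum>i\<in>UNIV. \<Sum>j\<in>UNIV. x$i * mu$i$j * y$i)"
    unfolding growth_op_def inner_vec_def
    by (simp add: algebra_simps sum_distrib_left sum.distrib sum_subtractf)
  moreover have "growth_op r mu x \<bullet> y = (\<Sum>i\<in>UNIV. x$i * r$i * y$i)
      + (\<Sum>i\<in>UNIV. \<Sum>j\<in>UNIV. mu$i$j * x$j * y$i) - (\<Sum>i\<in>UNIV. \<Sum>j\<in>UNIV. x$i * mu$i$j * y$i)"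
    unfolding growth_op_def inner_vec_def
    by (simp add: algebra_simps sum_distrib_left sum_distrib_right sum.distrib sum_subtractf)
  ultimately show ?thesis
    using swap by simp
qed

lemma inner_vec_abs_self: "vec_abs x \<bullet> vec_abs x = x \<bullet> x"
  by (simp add: vec_abs_def inner_vec_def)

lemma growth_op_quadratic_le_vec_abs:
  assumes "nonneg_matrix mu"
  shows "x \<bullet> growth_op r mu x \<le> vec_abs x \<bullet> growth_op r mu (vec_abs x)"
proof -
  have off_diagonal: "x$i * (\<Sum>j\<in>UNIV. mu$i$j * (x$j - x$i))
      \<le> \<bar>x$i\<bar> * (\<Sum>j\<in>UNIV. mu$i$j * (\<bar>x$j\<bar> - \<bar>x$i\<bar>))" for i
  proof -
    have "x$i * (\<Sum>j\<in>UNIV. mu$i$j * (x$j - x$i)) = (\<Sum>j\<in>UNIV. mu$i$j * (x$i * x$j - x$i * x$i))"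
      by (simp add: sum_distrib_left algebra_simps)
    also have "\<dots> \<le> (\<Sum>j\<in>UNIV. mu$i$j * (\<bar>x$i\<bar> * \<bar>x$j\<bar> - \<bar>x$i\<bar> * \<bar>x$i\<bar>))"
      using assms
      by (intro sum_mono mult_left_mono) (auto simp: nonneg_matrix_def abs_mult[symmetric])
    also have "\<dots> = \<bar>x$i\<bar> * (\<Sum>j\<in>UNIV. mu$i$j * (\<bar>x$j\<bar> - \<bar>x$i\<bar>))"
      by (simp add: sum_distrib_left algebra_simps del: abs_mult_self_eq)
    finally show ?thesis .
  qed
  have diagonal: "x$i * (r$i * x$i) = \<bar>x$i\<bar> * (r$i * \<bar>x$i\<bar>)" for i
    by (metis abs_mult_self_eq mult.left_commute)
  show ?thesis
    unfolding growth_op_def vec_abs_def inner_vec_def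
    by (intro sum_mono) (simp add: distrib_left diagonal off_diagonal)
qed

text \<open>Perron--Frobenius: along an edge \<open>i \<rightarrow> j\<close> of the irreducible matrix, a zero
  entry of a nonnegative eigenvector propagates from \<open>i\<close> to \<open>j\<close>.\<close>
lemma nonneg_eigenvector_growth_op_positive:
  assumes nonneg: "nonneg_matrix mu" and irr: "irreducible_matrix mu"
    and eigen: "growth_op r mu y = m *\<^sub>R y" and "nonneg_vec y" "y \<noteq> 0"
  shows "positive_vec y"
proof -
  have y_nonneg: "\<And>j. y$j \<ge> 0"
    using \<open>nonneg_vec y\<close> by (simp add: nonneg_vec_def)
  have edge: "y$j = 0" if "y$i = 0" "mu$i$j \<noteq> 0" for i j
  proof -
    have "(\<Sum>j\<in>UNIV. mu$i$j * y$j) = 0"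
      using arg_cong[OF eigen, of "\<lambda>x. x $ i"] that(1) by (simp add: growth_op_def)
    then have "\<forall>j\<in>UNIV. mu$i$j * y$j = 0"
      using nonneg y_nonneg by (subst sum_nonneg_eq_0_iff[symmetric]) (auto simp: nonneg_matrix_def)
    then show ?thesis using that(2) by auto
  qed
  have path: "y$j = 0" if "(i, j) \<in> {(a, b). mu $ a $ b \<noteq> 0}\<^sup>*" "y$i = 0" for i j
    using that by (induction rule: rtrancl_induct) (auto intro: edge)
  show ?thesis
  proof (rule ccontr)
    assume "\<not> positive_vec y"
    then obtain i where "y$i = 0"
      using y_nonneg by (metis positive_vec_def less_eq_real_def)
    then have "y = 0"
      using path irr by (auto simp: irreducible_matrix_def vec_eq_iff)
    then show False using \<open>y \<noteq> 0\<close> by simp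
  qed
qed

subsection \<open>The principal eigenvector and the spectral gap\<close>

text \<open>A maximiser \<open>x\<close> of the Rayleigh quotient is an eigenvector, and so is \<open>\<bar>x\<bar>\<close>,
  which is positive by Perron--Frobenius; then \<open>x + \<bar>x\<bar>\<close> is a nonnegative eigenvector, hence
  either zero or positive.\<close>
lemma growth_op_maximizer_sign_definite:
  assumes nonneg: "nonneg_matrix mu" and sym: "symmetric_matrix mu" and irr: "irreducible_matrix mu"
    and bound: "\<And>y. y \<bullet> growth_op r mu y \<le> l * (y \<bullet> y)"
    and max: "x \<bullet> growth_op r mu x = l * (x \<bullet> x)" and "x \<noteq> 0"
  shows "positive_vec x \<or> positive_vec (- x)"
proof -
  note eigenvector = rayleigh_maximizer_is_eigenvector[OF linear_growth_op
      growth_op_self_adjoint[OF sym] bound]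
  have "l * (vec_abs x \<bullet> vec_abs x) \<le> vec_abs x \<bullet> growth_op r mu (vec_abs x)"
    using max growth_op_quadratic_le_vec_abs[OF nonneg, of x r] by (simp add: inner_vec_abs_self)
  then have "growth_op r mu (vec_abs x) = l *\<^sub>R vec_abs x"
    using bound[of "vec_abs x"] by (intro eigenvector) simp
  moreover have "growth_op r mu x = l *\<^sub>R x"
    using max by (rule eigenvector)
  ultimately have eigen_sum: "growth_op r mu (x + vec_abs x) = l *\<^sub>R (x + vec_abs x)"
    by (simp add: linear_add[OF linear_growth_op] scaleR_add_right)
  have "nonneg_vec (vec_abs x)" "vec_abs x \<noteq> 0"
    using \<open>x \<noteq> 0\<close> by (auto simp: nonneg_vec_def vec_abs_def vec_eq_iff)
  then have abs_pos: "positive_vec (vec_abs x)"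
    by (rule nonneg_eigenvector_growth_op_positive[OF nonneg irr \<open>growth_op r mu (vec_abs x) = _\<close>])
  show ?thesis
  proof (cases "x + vec_abs x = 0")
    case True
    then have "- x = vec_abs x" by (simp add: add_eq_0_iff)
    then show ?thesis using abs_pos by simp
  next
    case False
    have "nonneg_vec (x + vec_abs x)"
      by (simp add: nonneg_vec_def vec_abs_def abs_if)
    then have "positive_vec (x + vec_abs x)"
      using False by (rule nonneg_eigenvector_growth_op_positive[OF nonneg irr eigen_sum])
    then have "positive_vec x"
      by (auto simp: positive_vec_def vec_abs_def abs_if split: if_splits)
    then show ?thesis ..
  qed
qed

lemma growth_op_principal_eigenvector:
  assumes nonneg: "nonneg_matrix mu" and sym: "symmetric_matrix mu" and irr: "irreducible_matrix mu"
    and r_pos: "positive_vec r"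
  obtains \<psi> l where "positive_vec \<psi>" "\<psi> \<bullet> \<psi> = 1" "growth_op r mu \<psi> = l *\<^sub>R \<psi>" "l > 0"
    "\<And>y. y \<bullet> growth_op r mu y \<le> l * (y \<bullet> y)"
proof -
  let ?Q = "\<lambda>x. x \<bullet> growth_op r mu x"
  have "sphere (0::real^'n) 1 \<noteq> {}"
    by simp
  then obtain x where x: "x \<in> sphere 0 1" "\<And>y. y \<in> sphere 0 1 \<Longrightarrow> ?Q y \<le> ?Q x"
    using continuous_attains_sup[OF compact_sphere _ continuous_on_growth_op_quadratic] by blast
  define l where "l = ?Q x"
  have bound: "?Q y \<le> l * (y \<bullet> y)" for y
    using quadratic_form_le_of_unit_vectors[OF linear_growth_op, of "\<lambda>_. True"] x
    by (auto simp: l_def)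
  have unit: "x \<bullet> x = 1"
    using x(1) by (simp add: dot_square_norm)
  have "positive_vec x \<or> positive_vec (- x)"
    using unit by (intro growth_op_maximizer_sign_definite[OF nonneg sym irr bound]) (auto simp: l_def)
  then obtain \<psi> where \<psi>: "\<psi> = x \<or> \<psi> = - x" and \<psi>_pos: "positive_vec \<psi>"
    by blast
  have \<psi>_unit: "\<psi> \<bullet> \<psi> = 1" and \<psi>_max: "?Q \<psi> = l * (\<psi> \<bullet> \<psi>)"
    using \<psi> unit by (auto simp: l_def linear_neg[OF linear_growth_op])
  have eigen: "growth_op r mu \<psi> = l *\<^sub>R \<psi>"
    by (rule rayleigh_maximizer_is_eigenvector[OF linear_growth_op
        growth_op_self_adjoint[OF sym] bound \<psi>_max])
  \<comment> \<open>Testing the eigen equation against the constant vector \<open>1\<close> gives \<open>l (1 \<bullet> \<psi>) = r \<bullet> \<psi>\<close>.\<close>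
  have "l * ((\<chi> i. 1) \<bullet> \<psi>) = r \<bullet> \<psi>"
    using growth_op_self_adjoint[OF sym, of "\<chi> i. 1" r \<psi>] eigen by (simp add: growth_op_const_one)
  moreover have "(\<chi> i. 1) \<bullet> \<psi> > 0" "r \<bullet> \<psi> > 0"
    using \<psi>_pos r_pos by (auto intro!: inner_pos_of_positive simp: positive_vec_def)
  ultimately have "l > 0"
    by (metis zero_less_mult_pos2)
  then show ?thesis
    using that \<psi>_pos \<psi>_unit eigen bound by blast
qed

text \<open>A maximiser orthogonal to the positive vector \<open>\<psi>\<close> would have to be sign definite.\<close>
lemma growth_op_quadratic_lt_on_perp:
  assumes nonneg: "nonneg_matrix mu" and sym: "symmetric_matrix mu" and irr: "irreducible_matrix mu"
    and \<psi>_pos: "positive_vec \<psi>" and bound: "\<And>y. y \<bullet> growth_op r mu y \<le> l * (y \<bullet> y)"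
    and "x \<bullet> \<psi> = 0" "x \<noteq> 0"
  shows "x \<bullet> growth_op r mu x < l * (x \<bullet> x)"
proof (rule ccontr)
  assume "\<not> x \<bullet> growth_op r mu x < l * (x \<bullet> x)"
  then have "positive_vec x \<or> positive_vec (- x)"
    using bound[of x] \<open>x \<noteq> 0\<close> by (intro growth_op_maximizer_sign_definite[OF nonneg sym irr bound]) auto
  then have "\<psi> \<bullet> x \<noteq> 0"
    using inner_pos_of_positive[OF \<psi>_pos] by (metis inner_minus_right neg_0_less_iff_less less_irrefl)
  then show False
    using \<open>x \<bullet> \<psi> = 0\<close> by (simp add: inner_commute)
qed

lemma growth_op_spectral_gap:
  fixes \<psi> :: "real^'n"
  assumes nonneg: "nonneg_matrix mu" and sym: "symmetric_matrix mu" and irr: "irreducible_matrix mu"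
    and \<psi>_pos: "positive_vec \<psi>" and bound: "\<And>y. y \<bullet> growth_op r mu y \<le> l * (y \<bullet> y)"
  obtains l2 where "l2 < l" "\<And>x. x \<bullet> \<psi> = 0 \<Longrightarrow> x \<bullet> growth_op r mu x \<le> l2 * (x \<bullet> x)"
proof -
  let ?Q = "\<lambda>x. x \<bullet> growth_op r mu x"
  define S where "S = sphere (0::real^'n) 1 \<inter> {x. x \<bullet> \<psi> = 0}"
  show ?thesis
  proof (cases "S = {}")
    case True
    have perp_zero: "x = 0" if "x \<bullet> \<psi> = 0" for x
    proof (rule ccontr)
      assume "x \<noteq> 0"
      then have "(1 / norm x) *\<^sub>R x \<in> S" using that by (simp add: S_def)
      then show False using True by simp
    qed
    show ?thesis
      by (rule that[of "l - 1"]) (auto dest: perp_zero simp: linear_0[OF linear_growth_op])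
  next
    case False
    have "compact S"
      unfolding S_def by (intro compact_Int_closed compact_sphere closed_Collect_eq continuous_intros)
    then obtain x where x: "x \<in> S" "\<And>y. y \<in> S \<Longrightarrow> ?Q y \<le> ?Q x"
      using continuous_attains_sup[OF _ False continuous_on_growth_op_quadratic] by metis
    define l2 where "l2 = ?Q x"
    have x_unit: "x \<bullet> x = 1" and x_perp: "x \<bullet> \<psi> = 0"
      using x(1) by (auto simp: S_def dot_square_norm)
    have gap: "?Q y \<le> l2 * (y \<bullet> y)" if "y \<bullet> \<psi> = 0" for y
      using quadratic_form_le_of_unit_vectors[OF linear_growth_op, of "\<lambda>z. z \<bullet> \<psi> = 0"] x that
      by (auto simp: l2_def S_def)
    have "x \<noteq> 0"
      using x_unit by auto
    then have "l2 < l"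
      using growth_op_quadratic_lt_on_perp[OF nonneg sym irr \<psi>_pos bound x_perp] x_unit
      by (simp add: l2_def)
    then show ?thesis
      using that[of l2] gap by simp
  qed
qed

subsection \<open>Scalar differential inequalities\<close>

lemma gronwall_exp_upper:
  fixes F F' :: "real \<Rightarrow> real"
  assumes "T \<ge> 0"
    and deriv: "\<And>t. t \<in> {0..T} \<Longrightarrow> (F has_real_derivative F' t) (at t within {0..T})"
    and ineq: "\<And>t. t \<in> {0..T} \<Longrightarrow> F' t \<le> - \<beta> * F t"
  shows "F T \<le> F 0 * exp (- \<beta> * T)"
proof -
  define G where "G t = F t * exp (\<beta> * t)" for t
  define G' where "G' t = (F' t + \<beta> * F t) * exp (\<beta> * t)" for t
  have G_deriv: "(G has_derivative (*) (G' t)) (at t within {0..T})" if "0 \<le> t" "t \<le> T" for t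
  proof -
    have "(G has_real_derivative G' t) (at t within {0..T})"
      unfolding G_def G'_def using deriv[of t] that
      by (auto intro!: derivative_eq_intros simp: algebra_simps)
    then show ?thesis by (simp add: has_field_derivative_def)
  qed
  then obtain t where t: "t \<in> {0..T}" "G T - G 0 = G' t * (T - 0)"
    using mvt_very_simple[OF \<open>T \<ge> 0\<close> G_deriv] by blast
  have "G' t \<le> 0"
    unfolding G'_def using ineq[OF t(1)] by (intro mult_nonpos_nonneg) auto
  then have "G' t * T \<le> 0"
    using \<open>T \<ge> 0\<close> by (rule mult_nonpos_nonneg)
  then have "G T \<le> G 0"
    using t(2) by simp
  then have "F T * exp (\<beta> * T) * exp (- \<beta> * T) \<le> F 0 * exp (- \<beta> * T)"
    by (simp add: G_def)
  then show ?thesis by (simp add: mult.assoc exp_add[symmetric])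
qed

lemma gronwall_exp_lower:
  fixes F F' :: "real \<Rightarrow> real"
  assumes "T \<ge> 0"
    and deriv: "\<And>t. t \<in> {0..T} \<Longrightarrow> (F has_real_derivative F' t) (at t within {0..T})"
    and ineq: "\<And>t. t \<in> {0..T} \<Longrightarrow> F' t \<ge> - \<beta> * F t"
  shows "F T \<ge> F 0 * exp (- \<beta> * T)"
proof -
  have "- F T \<le> - F 0 * exp (- \<beta> * T)"
  proof (rule gronwall_exp_upper[of T "\<lambda>t. - F t" "\<lambda>t. - F' t"])
    fix t assume "t \<in> {0..T}"
    show "((\<lambda>t. - F t) has_real_derivative - F' t) (at t within {0..T})"
      using deriv[OF \<open>t \<in> {0..T}\<close>] by (rule DERIV_minus)
    show "- F' t \<le> - \<beta> * - F t"
      using ineq[OF \<open>t \<in> {0..T}\<close>] by simp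
  qed fact
  then show ?thesis by simp
qed

lemma abs_le_sqrt_exp_of_square_le:
  fixes y F k t :: real
  assumes "y\<^sup>2 \<le> F * exp (- (2 * k) * t)" "F \<ge> 0"
  shows "\<bar>y\<bar> \<le> sqrt F * exp (- k * t)"
proof -
  have "exp (- (2 * k) * t) = (exp (- k * t))\<^sup>2"
    by (simp add: power2_eq_square exp_add[symmetric])
  then have "sqrt (F * exp (- (2 * k) * t)) = sqrt F * exp (- k * t)"
    by (simp add: real_sqrt_mult)
  then show ?thesis
    using real_sqrt_le_mono[OF assms(1)] by simp
qed

lemma two_mult_le_weighted_squares:
  fixes a b c :: real
  assumes "c > 0"
  shows "2 * a * b \<le> c * a\<^sup>2 + b\<^sup>2 / c"
proof -
  have "c * (c * a\<^sup>2 + b\<^sup>2 / c - 2 * a * b) = (c * a - b)\<^sup>2"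
    using assms by (simp add: field_simps power2_eq_square)
  then have "c * (c * a\<^sup>2 + b\<^sup>2 / c - 2 * a * b) \<ge> 0"
    by simp
  then show ?thesis
    using assms by (simp add: zero_le_mult_iff)
qed

lemma mult_exp_neg_le:
  fixes F \<beta> h t :: real
  assumes "F \<ge> 0" "\<beta> > 0" "h > 0" "t \<ge> F / (h * \<beta>)"
  shows "F * exp (- \<beta> * t) \<le> h"
proof -
  have "F \<le> h * (1 + \<beta> * t)"
    using assms by (simp add: field_simps)
  also have "\<dots> \<le> h * exp (\<beta> * t)"
    using assms(3) exp_ge_add_one_self[of "\<beta> * t"] by (simp add: add.commute)
  finally show ?thesis
    by (simp add: exp_minus field_simps)
qed

lemma linf_norm_le_norm: "linf_norm (x::real^'n) \<le> norm x"
  unfolding linf_norm_def by (subst Max_le_iff) (auto simp: component_le_norm_cart)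

subsection \<open>The stationary solution\<close>

locale principal_mode =
  fixes K :: real and r \<psi> :: "real^'n" and mu :: "real^'n^'n" and l l2 :: real
  assumes K_pos: "K > 0" and r_pos: "positive_vec r" and symmetric: "symmetric_matrix mu"
    and psi_pos: "positive_vec \<psi>" and psi_unit: "\<psi> \<bullet> \<psi> = 1"
    and eigen: "growth_op r mu \<psi> = l *\<^sub>R \<psi>" and l_pos: "l > 0" and gap_lt: "l2 < l"
    and gap: "\<And>x. x \<bullet> \<psi> = 0 \<Longrightarrow> x \<bullet> growth_op r mu x \<le> l2 * (x \<bullet> x)"
begin

lemma inner_psi_growth_op: "\<psi> \<bullet> growth_op r mu x = l * (\<psi> \<bullet> x)"
  using growth_op_self_adjoint[OF symmetric, of \<psi> r x] eigen by simp

lemma r_inner_psi_pos: "r \<bullet> \<psi> > 0"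
  using inner_pos_of_positive[OF r_pos psi_pos] .

lemma eigenvector_of_principal_eigenvalue:
  assumes "growth_op r mu y = l *\<^sub>R y"
  shows "y = (\<psi> \<bullet> y) *\<^sub>R \<psi>"
proof -
  define z where "z = y - (\<psi> \<bullet> y) *\<^sub>R \<psi>"
  have "z \<bullet> \<psi> = 0"
    unfolding z_def inner_diff_left inner_scaleR_left psi_unit by (simp add: inner_commute)
  moreover have "growth_op r mu z = l *\<^sub>R z"
    using assms by (simp add: z_def linear_diff[OF linear_growth_op] linear_cmul[OF linear_growth_op]
        eigen scaleR_diff_right)
  ultimately have "(l - l2) * (z \<bullet> z) \<le> 0"
    using gap[of z] by (simp add: algebra_simps)
  then have "z \<bullet> z \<le> 0"
    using gap_lt by (simp add: mult_le_0_iff)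
  then have "z = 0"
    by (metis inner_eq_zero_iff inner_ge_zero order_antisym)
  then show ?thesis by (simp add: z_def)
qed

definition equilibrium_level :: real where
  "equilibrium_level = l * K / (r \<bullet> \<psi>)"

lemma equilibrium_level_pos: "equilibrium_level > 0"
  using l_pos K_pos r_inner_psi_pos by (simp add: equilibrium_level_def)

definition equilibrium :: "real^'n" where
  "equilibrium = equilibrium_level *\<^sub>R \<psi>"

lemma positive_stationary_iff: "positive_vec y \<and> stationary K r mu y \<longleftrightarrow> y = equilibrium"
proof
  assume y: "positive_vec y \<and> stationary K r mu y"
  define s where "s = (r \<bullet> y) / K"
  have Ay: "growth_op r mu y = s *\<^sub>R y"
    using y by (simp add: stationary_def rhs_eq_growth_op s_def)
  have "l * (\<psi> \<bullet> y) = s * (\<psi> \<bullet> y)"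
    by (metis Ay inner_psi_growth_op inner_scaleR_right)
  moreover have "\<psi> \<bullet> y > 0"
    using inner_pos_of_positive[OF psi_pos] y by simp
  ultimately have "s = l"
    by (metis mult_right_cancel less_irrefl)
  then have y_eq: "y = (\<psi> \<bullet> y) *\<^sub>R \<psi>"
    using Ay by (intro eigenvector_of_principal_eigenvalue) simp
  then have "(\<psi> \<bullet> y) * (r \<bullet> \<psi>) / K = l"
    using \<open>s = l\<close> unfolding s_def by (metis inner_scaleR_right)
  then have "\<psi> \<bullet> y = equilibrium_level"
    using K_pos r_inner_psi_pos by (simp add: equilibrium_level_def field_simps)
  then show "y = equilibrium"
    using y_eq by (simp add: equilibrium_def)
next
  assume y: "y = equilibrium"
  have "positive_vec y"
    using equilibrium_level_pos psi_pos by (simp add: positive_vec_def y equilibrium_def)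
  moreover have "(r \<bullet> y) / K = l"
    using K_pos r_inner_psi_pos by (simp add: y equilibrium_def equilibrium_level_def)
  then have "stationary K r mu y"
    by (simp add: stationary_def rhs_eq_growth_op y equilibrium_def linear_cmul[OF linear_growth_op] eigen)
  ultimately show "positive_vec y \<and> stationary K r mu y" ..
qed

end

subsection \<open>Convergence of positive solutions\<close>

locale positive_trajectory = principal_mode +
  fixes v
  assumes solves: "\<And>t. t \<ge> 0 \<Longrightarrow> (v has_vector_derivative rhs K r mu (v t)) (at t within {0..})"
    and init_nonneg: "nonneg_vec (v 0)" and init_nonzero: "v 0 \<noteq> 0"
begin

definition competition :: "real \<Rightarrow> real" where
  "competition t = (r \<bullet> v t) / K"

definition amp :: "real \<Rightarrow> real" where
  "amp t = \<psi> \<bullet> v t"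

definition orth where
  "orth t = v t - amp t *\<^sub>R \<psi>"

lemma v_has_derivative:
  "t \<ge> 0 \<Longrightarrow> (v has_vector_derivative growth_op r mu (v t) - competition t *\<^sub>R v t) (at t within {0..})"
  using solves by (simp add: rhs_eq_growth_op competition_def)

lemma continuous_on_v: "continuous_on {0..} v"
  by (rule continuous_on_vector_derivative) (use v_has_derivative in auto)

lemma continuous_on_competition: "continuous_on {0..} competition"
  unfolding competition_def by (intro continuous_intros continuous_on_v) (use K_pos in auto)

lemma continuous_on_amp: "continuous_on {0..} amp"
  unfolding amp_def by (intro continuous_intros continuous_on_v)

lemma amp_has_derivative:
  assumes "t \<ge> 0"
  shows "(amp has_real_derivative (l - competition t) * amp t) (at t within {0..})"
proof -
  have "((\<lambda>t. \<psi> \<bullet> v t) has_vector_derivative \<psi> \<bullet> (growth_op r mu (v t) - competition t *\<^sub>R v t))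
      (at t within {0..})"
    by (rule bounded_linear.has_vector_derivative[OF bounded_linear_inner_right v_has_derivative[OF assms]])
  then show ?thesis
    by (simp add: amp_def[abs_def] has_real_derivative_iff_has_vector_derivative inner_psi_growth_op
        algebra_simps)
qed

lemma amp_init_pos: "amp 0 > 0"
  unfolding amp_def by (rule inner_pos_of_positive_nonneg[OF psi_pos init_nonneg init_nonzero])

text \<open>On \<open>[0, T]\<close> the rate \<open>l - competition\<close> is bounded, so \<open>a\<^sup>2\<close> can only decay exponentially.\<close>
lemma amp_nonzero:
  assumes "T \<ge> 0"
  shows "amp T \<noteq> 0"
proof -
  obtain B where B: "\<And>t. t \<in> {0..T} \<Longrightarrow> norm (competition t) \<le> B"
    using continuous_on_compact_bound[OF compact_Icc continuous_on_subset[OF continuous_on_competition]]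
    by (metis atLeastAtMost_iff atLeast_iff subsetI)
  define M where "M = \<bar>l\<bar> + B"
  have "amp T * amp T \<ge> amp 0 * amp 0 * exp (- (2 * M) * T)"
  proof (rule gronwall_exp_lower[OF assms])
    fix t assume t: "t \<in> {0..T}"
    have "(amp has_real_derivative (l - competition t) * amp t) (at t within {0..T})"
      using amp_has_derivative[of t] t by (auto intro: DERIV_subset)
    from DERIV_mult'[OF this this]
    show "((\<lambda>t. amp t * amp t) has_real_derivative 2 * (l - competition t) * (amp t * amp t))
        (at t within {0..T})"
      by (simp add: algebra_simps)
    have "l - competition t \<ge> - M"
      using B[OF t] by (simp add: M_def)
    then have "(- M) * (amp t * amp t) \<le> (l - competition t) * (amp t * amp t)"
      by (rule mult_right_mono) simp
    then show "2 * (l - competition t) * (amp t * amp t) \<ge> - (2 * M) * (amp t * amp t)"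
      by (simp add: algebra_simps)
  qed
  moreover have "amp 0 * amp 0 * exp (- (2 * M) * T) > 0"
    using amp_init_pos by simp
  ultimately show ?thesis by auto
qed

lemma amp_pos:
  assumes "t \<ge> 0"
  shows "amp t > 0"
proof (rule ccontr)
  assume "\<not> amp t > 0"
  then obtain s where "0 \<le> s" "s \<le> t" "amp s = 0"
    using IVT2'[of amp t 0 0] amp_init_pos assms continuous_on_subset[OF continuous_on_amp] by force
  then show False using amp_nonzero by auto
qed

lemma orth_perp: "orth t \<bullet> \<psi> = 0"
  unfolding orth_def amp_def inner_diff_left inner_scaleR_left psi_unit by (simp add: inner_commute)

lemma orth_has_derivative:
  assumes "t \<ge> 0"
  shows "(orth has_vector_derivative growth_op r mu (orth t) - competition t *\<^sub>R orth t) (at t within {0..})"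
proof -
  have "((\<lambda>t. amp t *\<^sub>R \<psi>) has_vector_derivative ((l - competition t) * amp t) *\<^sub>R \<psi>) (at t within {0..})"
    using has_vector_derivative_scaleR[OF amp_has_derivative[OF assms] has_vector_derivative_const]
    by simp
  from has_vector_derivative_diff[OF v_has_derivative[OF assms] this]
  show ?thesis
    by (simp add: orth_def[abs_def] linear_diff[OF linear_growth_op] linear_cmul[OF linear_growth_op] eigen
        algebra_simps)
qed

definition orth_ratio :: "real \<Rightarrow> real" where
  "orth_ratio t = (orth t \<bullet> orth t) / (amp t * amp t)"

lemma orth_ratio_nonneg: "orth_ratio t \<ge> 0"
  by (simp add: orth_ratio_def)

lemma orth_ratio_has_derivative:
  assumes "t \<ge> 0"
  shows "(orth_ratio has_real_derivative
      2 * (orth t \<bullet> growth_op r mu (orth t) - l * (orth t \<bullet> orth t)) / (amp t * amp t)) (at t within {0..})"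
proof -
  have "((\<lambda>t. orth t \<bullet> orth t) has_real_derivative
      2 * (orth t \<bullet> growth_op r mu (orth t)) - 2 * competition t * (orth t \<bullet> orth t)) (at t within {0..})"
    using bounded_bilinear.has_vector_derivative[OF bounded_bilinear_inner
        orth_has_derivative[OF assms] orth_has_derivative[OF assms]]
    by (simp add: has_real_derivative_iff_has_vector_derivative inner_diff_left inner_diff_right
        inner_commute[of "growth_op r mu (orth t)"] mult.assoc)
  moreover have "((\<lambda>t. amp t * amp t) has_real_derivative 2 * (l - competition t) * (amp t * amp t))
      (at t within {0..})"
    using DERIV_mult'[OF amp_has_derivative[OF assms] amp_has_derivative[OF assms]]
    by (simp add: algebra_simps)
  moreover have "amp t * amp t \<noteq> 0"
    using amp_pos[OF assms] by simp
  ultimately show ?thesis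
    unfolding orth_ratio_def
    by (rule DERIV_divide[THEN DERIV_cong]) (use amp_pos[OF assms] in \<open>simp add: field_simps\<close>)
qed

lemma orth_ratio_decay:
  assumes "t \<ge> 0"
  shows "orth_ratio t \<le> orth_ratio 0 * exp (- (2 * (l - l2)) * t)"
proof (rule gronwall_exp_upper[OF assms])
  fix s assume s: "s \<in> {0..t}"
  show "(orth_ratio has_real_derivative
      2 * (orth s \<bullet> growth_op r mu (orth s) - l * (orth s \<bullet> orth s)) / (amp s * amp s)) (at s within {0..t})"
    using orth_ratio_has_derivative[of s] s by (auto intro: DERIV_subset)
  have "2 * (orth s \<bullet> growth_op r mu (orth s) - l * (orth s \<bullet> orth s)) \<le> - (2 * (l - l2)) * (orth s \<bullet> orth s)"
    using gap[OF orth_perp] by (simp add: algebra_simps)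
  then show "2 * (orth s \<bullet> growth_op r mu (orth s) - l * (orth s \<bullet> orth s)) / (amp s * amp s)
      \<le> - (2 * (l - l2)) * orth_ratio s"
    by (simp add: orth_ratio_def divide_right_mono)
qed

lemma norm_orth_le:
  assumes "t \<ge> 0"
  shows "norm (orth t) \<le> amp t * (sqrt (orth_ratio 0) * exp (- (l - l2) * t))"
proof -
  have "norm (orth t) = amp t * sqrt (orth_ratio t)"
    using amp_pos[OF assms]
    by (simp add: orth_ratio_def norm_eq_sqrt_inner real_sqrt_divide)
  also have "sqrt (orth_ratio t) \<le> sqrt (orth_ratio 0) * exp (- (l - l2) * t)"
    using abs_le_sqrt_exp_of_square_le[of "sqrt (orth_ratio t)" "orth_ratio 0" "l - l2" t]
      orth_ratio_decay[OF assms] orth_ratio_nonneg by simp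
  then have "amp t * sqrt (orth_ratio t) \<le> amp t * (sqrt (orth_ratio 0) * exp (- (l - l2) * t))"
    using amp_pos[OF assms] by (intro mult_left_mono) auto
  finally show ?thesis .
qed

definition recip_dev :: "real \<Rightarrow> real" where
  "recip_dev t = 1 / amp t - 1 / equilibrium_level"

lemma recip_dev_has_derivative:
  assumes "t \<ge> 0"
  shows "(recip_dev has_real_derivative - l * recip_dev t + (r \<bullet> orth t) / (amp t * K)) (at t within {0..})"
proof -
  have "amp t \<noteq> 0"
    using amp_pos[OF assms] by simp
  have "(recip_dev has_real_derivative - ((l - competition t) * amp t) / (amp t * amp t)) (at t within {0..})"
    unfolding recip_dev_def[abs_def] using amp_has_derivative[OF assms] \<open>amp t \<noteq> 0\<close>
    by (auto intro!: derivative_eq_intros simp: power2_eq_square)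
  moreover have "r \<bullet> v t = r \<bullet> orth t + amp t * (r \<bullet> \<psi>)"
    by (simp add: orth_def inner_diff_right)
  then have "- ((l - competition t) * amp t) / (amp t * amp t) = - l * recip_dev t + (r \<bullet> orth t) / (amp t * K)"
    using \<open>amp t \<noteq> 0\<close> K_pos l_pos
    by (simp add: recip_dev_def competition_def equilibrium_level_def field_simps)
  ultimately show ?thesis by simp
qed

lemma forcing_square_le:
  assumes "t \<ge> 0"
  shows "((r \<bullet> orth t) / (amp t * K))\<^sup>2 \<le> (r \<bullet> r) * orth_ratio 0 / K\<^sup>2 * exp (- (2 * (l - l2)) * t)"
proof -
  have "(r \<bullet> orth t)\<^sup>2 / (amp t * amp t) \<le> (r \<bullet> r) * (orth t \<bullet> orth t) / (amp t * amp t)"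
    by (intro divide_right_mono Cauchy_Schwarz_ineq) simp
  also have "\<dots> = (r \<bullet> r) * orth_ratio t"
    by (simp add: orth_ratio_def)
  also have "\<dots> \<le> (r \<bullet> r) * (orth_ratio 0 * exp (- (2 * (l - l2)) * t))"
    using orth_ratio_decay[OF assms] by (intro mult_left_mono) simp_all
  finally show ?thesis
    using K_pos by (simp add: power2_eq_square divide_right_mono field_simps)
qed

lemma recip_dev_energy_le:
  assumes "t \<ge> 0"
  shows "2 * recip_dev t * (- l * recip_dev t + (r \<bullet> orth t) / (amp t * K))
    \<le> - l * (recip_dev t)\<^sup>2 + (r \<bullet> r) * orth_ratio 0 / (K\<^sup>2 * l) * exp (- (2 * (l - l2)) * t)"
proof -
  define f where "f = (r \<bullet> orth t) / (amp t * K)"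
  have "2 * recip_dev t * f \<le> l * (recip_dev t)\<^sup>2 + f\<^sup>2 / l"
    using two_mult_le_weighted_squares[OF l_pos] .
  moreover have "f\<^sup>2 / l \<le> (r \<bullet> r) * orth_ratio 0 / K\<^sup>2 * exp (- (2 * (l - l2)) * t) / l"
    unfolding f_def by (rule divide_right_mono[OF forcing_square_le[OF assms]]) (use l_pos in simp)
  ultimately show ?thesis
    by (simp add: f_def algebra_simps power2_eq_square)
qed

text \<open>Lyapunov function \<open>e\<^sup>2 + (E/\<gamma>) e\<^sup>-\<^sup>2\<^sup>\<gamma>\<^sup>t\<close> for \<open>e = recip_dev\<close>: the second term pays for
  the forcing term left over in \<open>recip_dev_energy_le\<close>.\<close>
lemma recip_dev_decay:
  obtains F \<beta> where "F \<ge> 0" "\<beta> > 0" "\<And>t. t \<ge> 0 \<Longrightarrow> \<bar>recip_dev t\<bar> \<le> F * exp (- \<beta> * t)"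
proof -
  define \<gamma> where "\<gamma> = l - l2"
  define E where "E = (r \<bullet> r) * orth_ratio 0 / (K\<^sup>2 * l)"
  define \<beta> where "\<beta> = min l \<gamma>"
  define X where "X t = exp (- (2 * \<gamma>) * t)" for t
  define L where "L t = (recip_dev t)\<^sup>2 + E / \<gamma> * X t" for t
  have \<gamma>_pos: "\<gamma> > 0" and \<beta>_pos: "\<beta> > 0" and E_nonneg: "E \<ge> 0"
    using gap_lt l_pos K_pos orth_ratio_nonneg[of 0] by (auto simp: \<gamma>_def \<beta>_def E_def)
  have L_decay: "L t \<le> L 0 * exp (- \<beta> * t)" if "t \<ge> 0" for t
  proof (rule gronwall_exp_upper[OF that])
    fix s assume s: "s \<in> {0..t}"
    define e' where "e' = - l * recip_dev s + (r \<bullet> orth s) / (amp s * K)"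
    have "(recip_dev has_real_derivative e') (at s within {0..t})"
      using DERIV_subset[OF recip_dev_has_derivative[of s]] s by (auto simp: e'_def)
    then show "(L has_real_derivative 2 * recip_dev s * e' - 2 * E * X s) (at s within {0..t})"
      unfolding L_def[abs_def] X_def using \<gamma>_pos
      by (auto intro!: derivative_eq_intros simp: field_simps)
    have "2 * recip_dev s * e' \<le> - l * (recip_dev s)\<^sup>2 + E * X s"
      using recip_dev_energy_le[of s] s by (simp add: e'_def E_def X_def \<gamma>_def)
    moreover have "\<beta> * (recip_dev s)\<^sup>2 \<le> l * (recip_dev s)\<^sup>2"
      by (intro mult_right_mono) (simp_all add: \<beta>_def)
    moreover have "\<beta> / \<gamma> * (E * X s) \<le> 1 * (E * X s)"
      using \<gamma>_pos E_nonneg by (intro mult_right_mono) (simp_all add: \<beta>_def X_def)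
    then have "\<beta> * (E / \<gamma> * X s) \<le> E * X s"
      by (simp add: mult.assoc)
    moreover have "- \<beta> * L s = - (\<beta> * (recip_dev s)\<^sup>2) - \<beta> * (E / \<gamma> * X s)"
      by (simp add: L_def algebra_simps)
    ultimately show "2 * recip_dev s * e' - 2 * E * X s \<le> - \<beta> * L s"
      by linarith
  qed
  have below_L: "(recip_dev t)\<^sup>2 \<le> L t" for t
    using E_nonneg \<gamma>_pos by (simp add: L_def X_def)
  have "(recip_dev t)\<^sup>2 \<le> L 0 * exp (- (2 * (\<beta> / 2)) * t)" if "t \<ge> 0" for t
    using order_trans[OF below_L L_decay[OF that]] by simp
  moreover have "L 0 \<ge> 0"
    using E_nonneg \<gamma>_pos by (simp add: L_def X_def)
  ultimately show ?thesis
    using \<beta>_pos by (intro that[of "sqrt (L 0)" "\<beta> / 2"] abs_le_sqrt_exp_of_square_le) auto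
qed

text \<open>Once \<open>\<bar>1/a - 2h\<bar> \<le> h\<close> with \<open>h = 1 / (2 equilibrium_level)\<close>, the amplitude stays below \<open>1/h\<close>.\<close>
lemma amp_bounded:
  obtains A where "A > 0" "\<And>t. t \<ge> 0 \<Longrightarrow> amp t \<le> A"
proof -
  obtain F \<beta> where F: "F \<ge> 0" "\<beta> > 0" "\<And>t. t \<ge> 0 \<Longrightarrow> \<bar>recip_dev t\<bar> \<le> F * exp (- \<beta> * t)"
    using recip_dev_decay by blast
  define h where "h = 1 / (2 * equilibrium_level)"
  have h_pos: "h > 0"
    using equilibrium_level_pos by (simp add: h_def)
  define T where "T = F / (h * \<beta>)"
  have "T \<ge> 0"
    using F h_pos by (simp add: T_def)
  have late: "amp t \<le> 1 / h" if "t \<ge> T" for t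
  proof -
    have "\<bar>recip_dev t\<bar> \<le> h"
      using F(3)[of t] mult_exp_neg_le[OF F(1,2) h_pos, of t] that \<open>T \<ge> 0\<close> by (simp add: T_def)
    moreover have "1 / amp t = recip_dev t + 2 * h"
      by (simp add: recip_dev_def h_def)
    ultimately have "h \<le> 1 / amp t"
      by (simp add: abs_le_iff)
    then show ?thesis
      using amp_pos[of t] that \<open>T \<ge> 0\<close> h_pos by (simp add: field_simps)
  qed
  obtain B where B: "\<And>t. t \<in> {0..T} \<Longrightarrow> norm (amp t) \<le> B"
    using continuous_on_compact_bound[OF compact_Icc continuous_on_subset[OF continuous_on_amp]]
    by (metis atLeastAtMost_iff atLeast_iff subsetI)
  show ?thesis
  proof (rule that[of "max B (1 / h)"])
    show "max B (1 / h) > 0"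
      using h_pos by (simp add: less_max_iff_disj)
    show "amp t \<le> max B (1 / h)" if "t \<ge> 0" for t
      using B[of t] late[of t] that by (cases "t \<le> T") auto
  qed
qed

lemma abs_amp_minus_equilibrium_level:
  assumes "t \<ge> 0"
  shows "\<bar>amp t - equilibrium_level\<bar> = amp t * equilibrium_level * \<bar>recip_dev t\<bar>"
proof -
  have "amp t - equilibrium_level = - (amp t * equilibrium_level * recip_dev t)"
    using amp_pos[OF assms] equilibrium_level_pos by (simp add: recip_dev_def field_simps)
  then show ?thesis
    using amp_pos[OF assms] equilibrium_level_pos by (simp add: abs_mult)
qed

lemma norm_v_minus_equilibrium_le:
  "norm (v t - equilibrium) \<le> \<bar>amp t - equilibrium_level\<bar> + norm (orth t)"
proof -
  have "v t - equilibrium = (amp t - equilibrium_level) *\<^sub>R \<psi> + orth t"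
    by (simp add: orth_def equilibrium_def algebra_simps)
  moreover have "norm \<psi> = 1"
    using psi_unit by (simp add: norm_eq_sqrt_inner)
  ultimately show ?thesis
    using norm_triangle_ineq[of "(amp t - equilibrium_level) *\<^sub>R \<psi>" "orth t"] by simp
qed

lemma exp_convergence:
  obtains C1 C2 where "C1 > 0" "C2 > 0" "\<And>t. t \<ge> 0 \<Longrightarrow> linf_norm (v t - equilibrium) \<le> C1 * exp (- C2 * t)"
proof -
  obtain F \<beta> where F: "F \<ge> 0" "\<beta> > 0" "\<And>t. t \<ge> 0 \<Longrightarrow> \<bar>recip_dev t\<bar> \<le> F * exp (- \<beta> * t)"
    using recip_dev_decay by blast
  obtain A where A: "A > 0" "\<And>t. t \<ge> 0 \<Longrightarrow> amp t \<le> A"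
    using amp_bounded by blast
  define c where "c = equilibrium_level"
  define q where "q = sqrt (orth_ratio 0)"
  have "c > 0" "q \<ge> 0"
    using equilibrium_level_pos orth_ratio_nonneg[of 0] by (simp_all add: c_def q_def)
  define C2 where "C2 = min \<beta> (l - l2)"
  define C1 where "C1 = A * c * F + A * q + 1"
  have "linf_norm (v t - equilibrium) \<le> C1 * exp (- C2 * t)" if "t \<ge> 0" for t
  proof -
    have "C2 * t \<le> \<beta> * t" "C2 * t \<le> (l - l2) * t"
      using that by (simp_all add: C2_def mult_right_mono)
    then have exp_\<beta>: "exp (- \<beta> * t) \<le> exp (- C2 * t)"
      and exp_gap: "exp (- (l - l2) * t) \<le> exp (- C2 * t)"
      by (simp_all add: algebra_simps)
    have "amp t * c * \<bar>recip_dev t\<bar> \<le> A * c * (F * exp (- C2 * t))"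
    proof (rule mult_mono)
      show "\<bar>recip_dev t\<bar> \<le> F * exp (- C2 * t)"
        using F(3)[OF that] mult_left_mono[OF exp_\<beta> F(1)] by linarith
    qed (use A(1) A(2)[OF that] amp_pos[OF that] \<open>c > 0\<close> in simp_all)
    moreover have "amp t * (q * exp (- (l - l2) * t)) \<le> A * (q * exp (- C2 * t))"
      by (rule mult_mono[OF A(2)[OF that] mult_left_mono[OF exp_gap \<open>q \<ge> 0\<close>]])
        (use A(1) \<open>q \<ge> 0\<close> in simp_all)
    ultimately have "norm (v t - equilibrium) \<le> (C1 - 1) * exp (- C2 * t)"
      using norm_v_minus_equilibrium_le[of t] abs_amp_minus_equilibrium_level[OF that]
        norm_orth_le[OF that]
      by (simp add: C1_def c_def q_def algebra_simps)
    moreover have "(C1 - 1) * exp (- C2 * t) \<le> C1 * exp (- C2 * t)"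
      by (simp add: algebra_simps)
    ultimately show ?thesis
      using linf_norm_le_norm[of "v t - equilibrium"] by linarith
  qed
  moreover have "C1 > 0" "C2 > 0"
    using A(1) \<open>c > 0\<close> \<open>q \<ge> 0\<close> F(1,2) gap_lt by (simp_all add: C1_def C2_def add_nonneg_pos)
  ultimately show ?thesis
    using that by blast
qed

end

theorem theorem1p2:
  fixes K :: real and r :: "real^'n" and mu :: "real^'n^'n"
  assumes "K > 0" and "positive_vec r"
    and "nonneg_matrix mu" and "symmetric_matrix mu" and "irreducible_matrix mu"
  shows "(\<exists>!vb. positive_vec vb \<and> stationary K r mu vb) \<and>
         (\<forall>vb v. positive_vec vb \<and> stationary K r mu vb \<and>
            (\<forall>t\<ge>0. (v has_vector_derivative rhs K r mu (v t)) (at t within {0..})) \<and>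
            nonneg_vec (v 0) \<and> v 0 \<noteq> 0 \<longrightarrow>
            (\<exists>C1 C2. C1 > 0 \<and> C2 > 0 \<and>
               (\<forall>t\<ge>0. linf_norm (v t - vb) \<le> C1 * exp (- C2 * t))))"
proof -
  obtain \<psi> l where \<psi>: "positive_vec \<psi>" "\<psi> \<bullet> \<psi> = 1" "growth_op r mu \<psi> = l *\<^sub>R \<psi>" "l > 0"
    and bound: "\<And>y. y \<bullet> growth_op r mu y \<le> l * (y \<bullet> y)"
    using growth_op_principal_eigenvector[OF assms(3-5,2)] by metis
  obtain l2 where "l2 < l" "\<And>x. x \<bullet> \<psi> = 0 \<Longrightarrow> x \<bullet> growth_op r mu x \<le> l2 * (x \<bullet> x)"
    using growth_op_spectral_gap[OF assms(3-5) \<psi>(1) bound] by metis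
  then interpret principal_mode K r \<psi> mu l l2
    using assms \<psi> by unfold_locales auto
  show ?thesis
  proof (intro conjI allI impI)
    show "\<exists>!vb. positive_vec vb \<and> stationary K r mu vb"
      by (simp add: positive_stationary_iff)
    fix vb v
    assume v: "positive_vec vb \<and> stationary K r mu vb \<and>
      (\<forall>t\<ge>0. (v has_vector_derivative rhs K r mu (v t)) (at t within {0..})) \<and>
      nonneg_vec (v 0) \<and> v 0 \<noteq> 0"
    then interpret positive_trajectory K r \<psi> mu l l2 v
      by unfold_locales auto
    show "\<exists>C1 C2. C1 > 0 \<and> C2 > 0 \<and> (\<forall>t\<ge>0. linf_norm (v t - vb) \<le> C1 * exp (- C2 * t))"
      using exp_convergence v positive_stationary_iff by metis
  qed
qed

end
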